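(* Let $\mathbf{A}\in\mathbb{R}^{M\times N}$, $\mathbf{Y}\in\mathbb{R}^{M\times L}$, and let $(\mathbf{g}(t),\mathbf{V}(t))\in\mathbb{R}^N\times\mathbb{R}^{N\times L}$, $t\ge 0$, evolve under the continuous gradient flow of $\mathcal{L}(\mathbf{g},\mathbf{V})=\Vert\mathbf{Y}-\mathbf{A}((\mathbf{g}^{\odot 2}\mathbf{1}_L)\odot\mathbf{V})\Vert_F^2$. Then for every $t\ge0$: (1) (global balancedness) $\frac12\Vert\mathbf{g}(t)\Vert_2^2-\Vert\mathbf{V}(t)\Vert_F^2=\frac12\Vert\mathbf{g}(0)\Vert_2^2-\Vert\mathbf{V}(0)\Vert_F^2$; (2) (row-wise balancedness) for each $i\in[N]$, $\frac12 g_i^2(t)-\sum_{j\in[L]}V_{ij}^2(t)=\frac12 g_i^2(0)-\sum_{j\in[L]}V_{ij}^2(0)$.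
   Context: $\odot$ denotes the entrywise product, $\mathbf{g}^{\odot2}$ the entrywise square, $\mathbf{1}_L$ the $1\times L$ all-ones row vector, so the matrix $(\mathbf{g}^{\odot 2}\mathbf{1}_L)\odot\mathbf{V}$ has entries $g_i^2V_{ij}$. Gradient flow means $\frac{d}{dt}g_l(t)=-\frac{\partial\mathcal{L}}{\partial g_l}(\mathbf g(t),\mathbf V(t))$ and $\frac{d}{dt}V_{lm}(t)=-\frac{\partial\mathcal{L}}{\partial V_{lm}}(\mathbf g(t),\mathbf V(t))$ for all $l\in[N]$, $m\in[L]$. *)

theory Defs
  imports "HOL-Analysis.Analysis"
begin

definition loss :: "real^'n^'m \<Rightarrow> real^'l^'m \<Rightarrow> real^'n \<Rightarrow> real^'l^'n \<Rightarrow> real" where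
  "loss A Y g V = (\<Sum>i\<in>UNIV. \<Sum>j\<in>UNIV.
      (Y $ i $ j - (\<Sum>k\<in>UNIV. A $ i $ k * ((g $ k)^2 * V $ k $ j)))^2)"

definition upd_vec :: "real^'n \<Rightarrow> 'n \<Rightarrow> real \<Rightarrow> real^'n" where
  "upd_vec x l s = (\<chi> k. if k = l then s else x $ k)"

definition upd_mat :: "real^'l^'n \<Rightarrow> 'n \<Rightarrow> 'l \<Rightarrow> real \<Rightarrow> real^'l^'n" where
  "upd_mat V l m s = (\<chi> k. \<chi> j. if k = l \<and> j = m then s else V $ k $ j)"

definition dloss_g :: "real^'n^'m \<Rightarrow> real^'l^'m \<Rightarrow> real^'n \<Rightarrow> real^'l^'n \<Rightarrow> 'n \<Rightarrow> real" where
  "dloss_g A Y g V l = deriv (\<lambda>s. loss A Y (upd_vec g l s) V) (g $ l)"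

definition dloss_V :: "real^'n^'m \<Rightarrow> real^'l^'m \<Rightarrow> real^'n \<Rightarrow> real^'l^'n \<Rightarrow> 'n \<Rightarrow> 'l \<Rightarrow> real" where
  "dloss_V A Y g V l m = deriv (\<lambda>s. loss A Y g (upd_mat V l m s)) (V $ l $ m)"

end

theory Submission imports Defs begin

text \<open>The loss depends on the pair \<open>(g\<^sub>i, V\<^sub>i\<^sub>*)\<close> only through \<open>g\<^sub>i\<^sup>2 V\<^sub>i\<^sub>*\<close>, so it is
  invariant under the rescaling \<open>g\<^sub>i \<mapsto> c g\<^sub>i\<close>, \<open>V\<^sub>i\<^sub>* \<mapsto> V\<^sub>i\<^sub>* / c\<^sup>2\<close>. Differentiating at
  \<open>c = 1\<close> gives \<open>g\<^sub>i \<partial>L/\<partial>g\<^sub>i = 2 \<Sum>\<^sub>j V\<^sub>i\<^sub>j \<partial>L/\<partial>V\<^sub>i\<^sub>j\<close>, which says precisely that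
  \<open>\<onehalf> g\<^sub>i\<^sup>2 - \<Sum>\<^sub>j V\<^sub>i\<^sub>j\<^sup>2\<close> has zero time derivative along the gradient flow. Summing over
  the rows gives the global balancedness.\<close>

definition residual :: "real^'n^'m \<Rightarrow> real^'l^'m \<Rightarrow> real^'n \<Rightarrow> real^'l^'n \<Rightarrow> 'm \<Rightarrow> 'l \<Rightarrow> real" where
  "residual A Y g V i j = Y $ i $ j - (\<Sum>k\<in>UNIV. A $ i $ k * ((g $ k)^2 * V $ k $ j))"

definition row_balance :: "real^'n \<Rightarrow> real^'l^'n \<Rightarrow> 'n \<Rightarrow> real" where
  "row_balance g V i = 1/2 * (g $ i)^2 - (\<Sum>j\<in>UNIV. (V $ i $ j)^2)"

lemma upd_vec_nth [simp]: "upd_vec x l s $ k = (if k = l then s else x $ k)"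
  by (simp add: upd_vec_def)

lemma upd_mat_nth [simp]: "upd_mat V l m s $ k $ j = (if k = l \<and> j = m then s else V $ k $ j)"
  by (simp add: upd_mat_def)

lemma upd_vec_same [simp]: "upd_vec x l (x $ l) = x"
  by (simp add: vec_eq_iff)

lemma upd_mat_same [simp]: "upd_mat V l m (V $ l $ m) = V"
  by (simp add: vec_eq_iff)

lemma loss_has_real_derivative_along:
  fixes A :: "real^'n^'m" and Y :: "real^'l^'m"
    and G :: "real \<Rightarrow> real^'n" and W :: "real \<Rightarrow> real^'l^'n"
  assumes "\<And>k. ((\<lambda>s. G s $ k) has_real_derivative G' k) (at x)"
    and "\<And>k j. ((\<lambda>s. W s $ k $ j) has_real_derivative W' k j) (at x)"
  shows "((\<lambda>s. loss A Y (G s) (W s)) has_real_derivative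
      - 2 * (\<Sum>i\<in>UNIV. \<Sum>j\<in>UNIV. residual A Y (G x) (W x) i j *
        (\<Sum>k\<in>UNIV. A $ i $ k * (2 * G x $ k * G' k * W x $ k $ j + (G x $ k)^2 * W' k j)))) (at x)"
proof -
  have "((\<lambda>s. (Y $ i $ j - (\<Sum>k\<in>UNIV. A $ i $ k * ((G s $ k)^2 * W s $ k $ j)))^2)
      has_real_derivative - 2 * residual A Y (G x) (W x) i j *
        (\<Sum>k\<in>UNIV. A $ i $ k * (2 * G x $ k * G' k * W x $ k $ j + (G x $ k)^2 * W' k j))) (at x)"
    for i j
    unfolding residual_def
    by (auto intro!: derivative_eq_intros assms simp: algebra_simps)
  then have "((\<lambda>s. loss A Y (G s) (W s)) has_real_derivative
      (\<Sum>i\<in>UNIV. \<Sum>j\<in>UNIV. - 2 * residual A Y (G x) (W x) i j *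
        (\<Sum>k\<in>UNIV. A $ i $ k * (2 * G x $ k * G' k * W x $ k $ j + (G x $ k)^2 * W' k j)))) (at x)"
    unfolding loss_def by (intro DERIV_sum)
  then show ?thesis
    by (simp add: sum_distrib_left mult.assoc)
qed

lemma dloss_g_eq:
  "dloss_g A Y g V l =
    - 4 * g $ l * (\<Sum>i\<in>UNIV. \<Sum>j\<in>UNIV. residual A Y g V i j * A $ i $ l * V $ l $ j)"
proof -
  have "((\<lambda>s. upd_vec g l s $ k) has_real_derivative (if k = l then 1 else 0)) (at x)" for k x
    by (cases "k = l") (auto intro!: derivative_eq_intros)
  from loss_has_real_derivative_along[where A = A and Y = Y and W = "\<lambda>_. V" and W' = "\<lambda>_ _. 0"
      and x = "g $ l", OF this]
  have "dloss_g A Y g V l = - 2 * (\<Sum>i\<in>UNIV. \<Sum>j\<in>UNIV. residual A Y g V i j *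
      (\<Sum>k\<in>UNIV. A $ i $ k * (2 * g $ k * (if k = l then 1 else 0) * V $ k $ j)))"
    unfolding dloss_g_def by (simp add: DERIV_imp_deriv del: upd_vec_nth)
  also have "\<dots> = - 4 * g $ l * (\<Sum>i\<in>UNIV. \<Sum>j\<in>UNIV. residual A Y g V i j * A $ i $ l * V $ l $ j)"
    by (simp add: if_distrib[of "\<lambda>c. _ * c"] if_distrib[of "\<lambda>c. c * _"] sum_distrib_left
        algebra_simps cong: if_cong)
  finally show ?thesis .
qed

lemma dloss_V_eq:
  "dloss_V A Y g V l m = - 2 * (g $ l)^2 * (\<Sum>i\<in>UNIV. residual A Y g V i m * A $ i $ l)"
proof -
  have "((\<lambda>s. upd_mat V l m s $ k $ j) has_real_derivative (if k = l \<and> j = m then 1 else 0)) (at x)"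
    for k j x
    by (cases "k = l \<and> j = m") (auto intro!: derivative_eq_intros)
  from loss_has_real_derivative_along[where A = A and Y = Y and G = "\<lambda>_. g" and G' = "\<lambda>_. 0"
      and x = "V $ l $ m", OF _ this]
  have "dloss_V A Y g V l m = - 2 * (\<Sum>i\<in>UNIV. \<Sum>j\<in>UNIV. residual A Y g V i j *
      (\<Sum>k\<in>UNIV. A $ i $ k * ((g $ k)^2 * (if k = l \<and> j = m then 1 else 0))))"
    unfolding dloss_V_def by (simp add: DERIV_imp_deriv del: upd_mat_nth)
  also have "\<dots> = - 2 * (g $ l)^2 * (\<Sum>i\<in>UNIV. residual A Y g V i m * A $ i $ l)"
  proof -
    have "(\<Sum>k\<in>UNIV. A $ i $ k * ((g $ k)^2 * (if k = l \<and> j = m then 1 else 0)))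
        = (if j = m then A $ i $ l * (g $ l)^2 else 0)" for i j
      by (simp add: if_distrib[of "\<lambda>c. _ * c"] cong: if_cong)
    then show ?thesis
      by (simp add: if_distrib[of "\<lambda>c. _ * c"] sum_distrib_left algebra_simps cong: if_cong)
  qed
  finally show ?thesis .
qed

lemma dloss_rescaling_identity:
  "g $ l * dloss_g A Y g V l = 2 * (\<Sum>j\<in>UNIV. V $ l $ j * dloss_V A Y g V l j)"
proof -
  have "(\<Sum>j\<in>UNIV. V $ l $ j * dloss_V A Y g V l j)
      = - 2 * (g $ l)^2 * (\<Sum>j\<in>UNIV. \<Sum>i\<in>UNIV. residual A Y g V i j * A $ i $ l * V $ l $ j)"
    by (simp add: dloss_V_eq sum_distrib_left sum_distrib_right algebra_simps)
  also have "(\<Sum>j\<in>UNIV. \<Sum>i\<in>UNIV. residual A Y g V i j * A $ i $ l * V $ l $ j)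
      = (\<Sum>i\<in>UNIV. \<Sum>j\<in>UNIV. residual A Y g V i j * A $ i $ l * V $ l $ j)"
    by (rule sum.swap)
  finally show ?thesis
    by (simp add: dloss_g_eq power2_eq_square algebra_simps)
qed

lemma row_balance_has_derivative_zero:
  fixes A :: "real^'n^'m" and Y :: "real^'l^'m"
    and g :: "real \<Rightarrow> real^'n" and V :: "real \<Rightarrow> real^'l^'n"
  assumes "\<And>l. ((\<lambda>s. g s $ l) has_real_derivative (- dloss_g A Y (g t) (V t) l)) (at t within S)"
    and "\<And>l m. ((\<lambda>s. V s $ l $ m) has_real_derivative (- dloss_V A Y (g t) (V t) l m)) (at t within S)"
  shows "((\<lambda>s. row_balance (g s) (V s) i) has_real_derivative 0) (at t within S)"
proof -
  have "((\<lambda>s. row_balance (g s) (V s) i) has_real_derivative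
      - (dloss_g A Y (g t) (V t) i * g t $ i)
      + 2 * (\<Sum>j\<in>UNIV. dloss_V A Y (g t) (V t) i j * V t $ i $ j)) (at t within S)"
    unfolding row_balance_def
    by (auto intro!: derivative_eq_intros assms simp: sum_distrib_left sum_negf)
  then show ?thesis
    by (simp add: dloss_rescaling_identity mult.commute[of "dloss_g _ _ _ _ _"]
        mult.commute[of "dloss_V _ _ _ _ _ _"])
qed

lemma row_balance_conserved:
  fixes A :: "real^'n^'m" and Y :: "real^'l^'m"
    and g :: "real \<Rightarrow> real^'n" and V :: "real \<Rightarrow> real^'l^'n"
  assumes "\<And>t l. t \<ge> 0 \<Longrightarrow>
      ((\<lambda>s. g s $ l) has_real_derivative (- dloss_g A Y (g t) (V t) l)) (at t within {0..})"
    and "\<And>t l m. t \<ge> 0 \<Longrightarrow>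
      ((\<lambda>s. V s $ l $ m) has_real_derivative (- dloss_V A Y (g t) (V t) l m)) (at t within {0..})"
    and "t \<ge> 0"
  shows "row_balance (g t) (V t) i = row_balance (g 0) (V 0) i"
proof -
  have "((\<lambda>s. row_balance (g s) (V s) i) has_real_derivative 0) (at s within {0..})"
    if "s \<in> {0..}" for s
    using that by (intro row_balance_has_derivative_zero[where A = A and Y = Y] assms(1,2)) simp_all
  then have "\<exists>c. \<forall>s\<in>{0::real..}. row_balance (g s) (V s) i = c"
    by (intro has_field_derivative_zero_constant) simp_all
  then obtain c where "\<forall>s\<in>{0::real..}. row_balance (g s) (V s) i = c" ..
  then show ?thesis
    using \<open>t \<ge> 0\<close> by simp
qed

theorem lemma5p1:
  fixes A :: "real^'n^'m" and Y :: "real^'l^'m"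
    and g :: "real \<Rightarrow> real^'n" and V :: "real \<Rightarrow> real^'l^'n"
  assumes flow_g: "\<And>t l. t \<ge> 0 \<Longrightarrow>
      ((\<lambda>s. g s $ l) has_real_derivative (- dloss_g A Y (g t) (V t) l)) (at t within {0..})"
    and flow_V: "\<And>t l m. t \<ge> 0 \<Longrightarrow>
      ((\<lambda>s. V s $ l $ m) has_real_derivative (- dloss_V A Y (g t) (V t) l m)) (at t within {0..})"
  shows "\<forall>t\<ge>0.
      (1/2 * (\<Sum>i\<in>UNIV. (g t $ i)^2) - (\<Sum>i\<in>UNIV. \<Sum>j\<in>UNIV. (V t $ i $ j)^2)
        = 1/2 * (\<Sum>i\<in>UNIV. (g 0 $ i)^2) - (\<Sum>i\<in>UNIV. \<Sum>j\<in>UNIV. (V 0 $ i $ j)^2))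
    \<and> (\<forall>i. 1/2 * (g t $ i)^2 - (\<Sum>j\<in>UNIV. (V t $ i $ j)^2)
            = 1/2 * (g 0 $ i)^2 - (\<Sum>j\<in>UNIV. (V 0 $ i $ j)^2))"
proof (intro allI impI conjI)
  fix t :: real
  assume "t \<ge> 0"
  then have row: "row_balance (g t) (V t) i = row_balance (g 0) (V 0) i" for i
    using row_balance_conserved[OF flow_g flow_V] by blast
  have total: "1/2 * (\<Sum>i\<in>UNIV. (g s $ i)^2) - (\<Sum>i\<in>UNIV. \<Sum>j\<in>UNIV. (V s $ i $ j)^2)
      = (\<Sum>i\<in>UNIV. row_balance (g s) (V s) i)" for s
    by (simp add: row_balance_def sum_subtractf sum_distrib_left)
  show "1/2 * (\<Sum>i\<in>UNIV. (g t $ i)^2) - (\<Sum>i\<in>UNIV. \<Sum>j\<in>UNIV. (V t $ i $ j)^2)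
      = 1/2 * (\<Sum>i\<in>UNIV. (g 0 $ i)^2) - (\<Sum>i\<in>UNIV. \<Sum>j\<in>UNIV. (V 0 $ i $ j)^2)"
    unfolding total row ..
  show "1/2 * (g t $ i)^2 - (\<Sum>j\<in>UNIV. (V t $ i $ j)^2)
      = 1/2 * (g 0 $ i)^2 - (\<Sum>j\<in>UNIV. (V 0 $ i $ j)^2)" for i
    using row[of i] unfolding row_balance_def .
qed

end
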